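(* Let $q\ge2$, $n\ge2$, $X=\{0,\ldots,q-1\}$, and let $\mathcal{L}=\{L_1,\ldots,L_k\}$ be a partition of $X^n$ with respect to which the Insect Markov chain on $X^n$ is lumpable. For each $i$ let $L_i'\subseteq X^{n-1}$ be the set of words obtained by deleting the last letter from the elements of $L_i$. If $L_i'\cap L_j'\neq\emptyset$ for some indices $i,j$, then $L_i'=L_j'$.
   Context: For $x,y\in X^n$, $d(x,y)=n-\max\{m\in\{0,\ldots,n\}: x_1\cdots x_m=y_1\cdots y_m\}$. Set $\alpha_j=\frac{q^j-1}{q^{j+1}-1}$ for $1\le j\le n-1$ and $\alpha_n=0$. The Insect Markov chain on $X^n$ has transition probabilities: if $d(x,y)\in\{0,1\}$, $p(x,y)=q^{-1}(1-\alpha_1)+\sum_{i=2}^nq^{-i}\alpha_1\cdots\alpha_{i-1}(1-\alpha_i)$; if $d(x,y)=j>1$, $p(x,y)=\sum_{i=j}^nq^{-i}\alpha_1\cdots\alpha_{i-1}(1-\alpha_i)$. A chain is lumpable with respect to a partition if for all parts $L,L'$ the map $x\mapsto\sum_{y\in L'}p(x,y)$ is constant on $L$. *)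

theory Defs
  imports Complex_Main "HOL-Library.Disjoint_Sets"
begin

definition words :: "nat \<Rightarrow> nat \<Rightarrow> nat list set" where
  "words q n = {x. length x = n \<and> (\<forall>a\<in>set x. a < q)}"

definition insect_dist :: "nat \<Rightarrow> nat list \<Rightarrow> nat list \<Rightarrow> nat" where
  "insect_dist n x y = n - (GREATEST m. m \<le> n \<and> take m x = take m y)"

definition insect_alpha :: "nat \<Rightarrow> nat \<Rightarrow> nat \<Rightarrow> real" where
  "insect_alpha q n j = (if j = n then 0 else (real q ^ j - 1) / (real q ^ (j + 1) - 1))"

definition insect_p :: "nat \<Rightarrow> nat \<Rightarrow> nat list \<Rightarrow> nat list \<Rightarrow> real" where
  "insect_p q n x y =
     (let a = insect_alpha q n; j = insect_dist n x y in
      if j \<in> {0, 1} then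
        (1 / real q) * (1 - a 1)
        + (\<Sum>i = 2..n. (1 / real q ^ i) * (\<Prod>l = 1..<i. a l) * (1 - a i))
      else
        (\<Sum>i = j..n. (1 / real q ^ i) * (\<Prod>l = 1..<i. a l) * (1 - a i)))"

definition insect_lumpable :: "nat \<Rightarrow> nat \<Rightarrow> nat list set set \<Rightarrow> bool" where
  "insect_lumpable q n P \<longleftrightarrow>
     (\<forall>L\<in>P. \<forall>L'\<in>P. \<forall>x\<in>L. \<forall>y\<in>L.
        (\<Sum>z\<in>L'. insect_p q n x z) = (\<Sum>z\<in>L'. insect_p q n y z))"

end

theory Submission
  imports Defs
begin

text \<open>Write \<open>A k\<close> for the operator averaging a function on \<open>X\<^sup>n\<close> over the last \<open>k\<close> letters of
its argument. Then \<open>A j \<circ> A k = A (max j k)\<close>, and the transition operator of the Insect chain is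
\<open>T = \<Sum>\<^sub>i w\<^sub>i A i\<close> with positive weights \<open>w\<^sub>i\<close>. Consequently \<open>T\<close> vanishes on the range of
\<open>I - A 1\<close> and acts as the scalar \<open>\<lambda>\<^sub>k = w\<^sub>1 + \<dots> + w\<^sub>k\<close> on the range of \<open>A k - A (k + 1)\<close>, so
that \<open>(I - T/\<lambda>\<^sub>n) \<circ> \<dots> \<circ> (I - T/\<lambda>\<^sub>1) = I - A 1\<close>. Lumpability says that \<open>T\<close> maps functions
constant on the blocks to such functions; hence so does \<open>A 1\<close>. Applied to the indicator of \<open>L\<^sub>j\<close>,
this shows that whether some word of \<open>L\<^sub>j\<close> shares its first \<open>n - 1\<close> letters with \<open>x\<close> is the
same for all \<open>x \<in> L\<^sub>i\<close>.\<close>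

lemma take_eq_if_longer_take_eq:
  assumes "m \<le> m'" and "take m' xs = take m' ys"
  shows "take m xs = take m ys"
proof -
  have "take m (take m' xs) = take m (take m' ys)" using assms(2) by simp
  then show ?thesis using assms(1) by (simp add: min_absorb1)
qed

lemma finite_words: "finite (words q n)"
proof -
  have "words q n = {xs. set xs \<subseteq> {..<q} \<and> length xs = n}"
    unfolding words_def by auto
  then show ?thesis by (simp add: finite_lists_length_eq)
qed

lemma words_with_prefix:
  assumes "x \<in> words q n" and "m \<le> n"
  shows "{z \<in> words q n. take m z = take m x} = (\<lambda>w. take m x @ w) ` words q (n - m)"
proof (intro equalityI subsetI)
  fix z assume z: "z \<in> {z \<in> words q n. take m z = take m x}"
  then have "z = take m x @ drop m z" using append_take_drop_id[of m z] by simp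
  moreover have "drop m z \<in> words q (n - m)"
    using z by (auto simp: words_def dest: in_set_dropD)
  ultimately show "z \<in> (\<lambda>w. take m x @ w) ` words q (n - m)" by blast
qed (use assms in \<open>auto simp: words_def dest!: in_set_takeD\<close>)

lemma card_words_with_prefix:
  assumes "x \<in> words q n" and "m \<le> n"
  shows "card {z \<in> words q n. take m z = take m x} = q ^ (n - m)"
proof -
  have "words q (n - m) = {xs. set xs \<subseteq> {..<q} \<and> length xs = n - m}"
    unfolding words_def by auto
  then have "card (words q (n - m)) = q ^ (n - m)" by (simp add: card_lists_length_eq)
  then show ?thesis
    unfolding words_with_prefix[OF assms] by (subst card_image) (auto intro: inj_onI)
qed

lemma insect_dist_le_iff:
  assumes "length x = n" and "length z = n"
  shows "insect_dist n x z \<le> i \<longleftrightarrow> take (n - i) x = take (n - i) z"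
proof -
  let ?G = "GREATEST m. m \<le> n \<and> take m x = take m z"
  have G: "?G \<le> n \<and> take ?G x = take ?G z"
    by (rule GreatestI_nat[where k=0]) auto
  have G_max: "m \<le> ?G" if "m \<le> n" "take m x = take m z" for m
    by (rule Greatest_le_nat[where b=n]) (use that in auto)
  show ?thesis
  proof
    assume "insect_dist n x z \<le> i"
    then have le: "n - i \<le> ?G" unfolding insect_dist_def by simp
    have "take (n - i) x = take (n - i) (take ?G x)" using le by (simp add: min_absorb1)
    also have "\<dots> = take (n - i) (take ?G z)" using G by simp
    also have "\<dots> = take (n - i) z" using le by (simp add: min_absorb1)
    finally show "take (n - i) x = take (n - i) z" .
  next
    assume "take (n - i) x = take (n - i) z"
    then show "insect_dist n x z \<le> i"
      using G_max[of "n - i"] unfolding insect_dist_def by simp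
  qed
qed

definition insect_weight :: "nat \<Rightarrow> nat \<Rightarrow> nat \<Rightarrow> real" where
  "insect_weight q n i = (\<Prod>l = 1..<i. insect_alpha q n l) * (1 - insect_alpha q n i)"

lemma insect_p_eq_sum:
  assumes "length x = n" and "length z = n" and "n \<ge> 1"
  shows "insect_p q n x z =
    (\<Sum>i = 1..n. if take (n - i) x = take (n - i) z then insect_weight q n i / real q ^ i else 0)"
proof -
  let ?d = "insect_dist n x z" and ?c = "\<lambda>i. insect_weight q n i / real q ^ i"
  have agree_iff: "take (n - i) x = take (n - i) z \<longleftrightarrow> ?d \<le> i" for i
    using insect_dist_le_iff[OF assms(1,2)] by simp
  have c: "?c i = 1 / real q ^ i * (\<Prod>l = 1..<i. insect_alpha q n l) * (1 - insect_alpha q n i)" for i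
    by (simp add: insect_weight_def)
  show ?thesis
  proof (cases "?d \<in> {0, 1}")
    case True
    then have "(\<Sum>i = 1..n. if take (n - i) x = take (n - i) z then ?c i else 0) = (\<Sum>i = 1..n. ?c i)"
      unfolding agree_iff by (intro sum.cong) auto
    also have "\<dots> = ?c 1 + (\<Sum>i = 2..n. ?c i)"
      using assms(3) by (simp add: sum.atLeast_Suc_atMost numeral_2_eq_2)
    finally show ?thesis using True unfolding insect_p_def Let_def c by simp
  next
    case False
    then have "{i \<in> {1..n}. ?d \<le> i} = {?d..n}" by auto
    then have "(\<Sum>i = 1..n. if take (n - i) x = take (n - i) z then ?c i else 0) = (\<Sum>i = ?d..n. ?c i)"
      unfolding agree_iff sum.inter_filter[OF finite_atLeastAtMost, symmetric] by simp
    then show ?thesis using False unfolding insect_p_def Let_def c by simp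
  qed
qed

lemma insect_alpha_pos:
  assumes "q \<ge> 2" and "1 \<le> l" and "l < n"
  shows "insect_alpha q n l > 0"
proof -
  have "1 < real q ^ m" if "m > 0" for m
    using assms that by (simp add: one_less_power)
  from this[of l] this[of "l + 1"] show ?thesis
    using assms unfolding insect_alpha_def by simp
qed

lemma insect_alpha_less_1:
  assumes "q \<ge> 2"
  shows "insect_alpha q n l < 1"
proof -
  have "real q ^ l < real q ^ (l + 1)" using assms by (simp add: power_strict_increasing)
  moreover have "1 \<le> real q ^ l" using assms by (simp add: one_le_power)
  ultimately show ?thesis unfolding insect_alpha_def by auto
qed

lemma insect_weight_pos:
  assumes "q \<ge> 2" and "i \<le> n"
  shows "insect_weight q n i > 0"
proof -
  have "(\<Prod>l = 1..<i. insect_alpha q n l) > 0"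
    using insect_alpha_pos[OF assms(1)] assms(2) by (intro prod_pos) auto
  then show ?thesis
    using insect_alpha_less_1[OF assms(1)] unfolding insect_weight_def by simp
qed

locale insect_chain =
  fixes q n :: nat
  assumes q_ge_2: "q \<ge> 2" and n_ge_1: "n \<ge> 1"
begin

text \<open>\<open>suffix_avg k\<close>, \<open>trans_op\<close> and \<open>weight_sum k\<close> are the \<open>A k\<close>, \<open>T\<close> and \<open>\<lambda>\<^sub>k\<close> above.\<close>

abbreviation states :: "nat list set" where
  "states \<equiv> words q n"

definition cylinder :: "nat \<Rightarrow> nat list \<Rightarrow> nat list set" where
  "cylinder m x = {z \<in> states. take m z = take m x}"

definition suffix_avg :: "nat \<Rightarrow> (nat list \<Rightarrow> real) \<Rightarrow> nat list \<Rightarrow> real" where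
  "suffix_avg k g x = (\<Sum>z\<in>cylinder (n - k) x. g z) / real q ^ k"

definition trans_op :: "(nat list \<Rightarrow> real) \<Rightarrow> nat list \<Rightarrow> real" where
  "trans_op g x = (\<Sum>z\<in>states. insect_p q n x z * g z)"

definition weight_sum :: "nat \<Rightarrow> real" where
  "weight_sum k = (\<Sum>i = 1..k. insect_weight q n i)"

lemma q_pos: "real q > 0"
  using q_ge_2 by simp

lemma finite_cylinder: "finite (cylinder m x)"
  unfolding cylinder_def using finite_words by simp

lemma card_cylinder: "x \<in> states \<Longrightarrow> m \<le> n \<Longrightarrow> card (cylinder m x) = q ^ (n - m)"
  unfolding cylinder_def by (rule card_words_with_prefix)

lemma cylinder_subset: "cylinder m x \<subseteq> states"
  unfolding cylinder_def by simp

lemma cylinder_eq: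
  assumes "m \<le> m'" and "z \<in> cylinder m' x"
  shows "cylinder m z = cylinder m x"
proof -
  have "take m z = take m x"
    using assms(2) unfolding cylinder_def by (auto intro: take_eq_if_longer_take_eq[OF assms(1)])
  then show ?thesis unfolding cylinder_def by simp
qed

lemma cylinder_restrict:
  assumes "m \<le> m'" and "z \<in> cylinder m x"
  shows "cylinder m' z = {y \<in> cylinder m x. take m' y = take m' z}"
proof -
  have "cylinder m' z \<subseteq> cylinder m z"
    using take_eq_if_longer_take_eq[OF assms(1)] unfolding cylinder_def by auto
  then show ?thesis using cylinder_eq[OF order.refl assms(2)] unfolding cylinder_def by auto
qed

lemma suffix_avg_cong:
  "(\<And>z. z \<in> states \<Longrightarrow> g z = h z) \<Longrightarrow> suffix_avg k g x = suffix_avg k h x"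
  unfolding suffix_avg_def cylinder_def by simp

lemma suffix_avg_diff_divide:
  "suffix_avg k (\<lambda>z. g z - h z / c) x = suffix_avg k g x - suffix_avg k h x / c"
  unfolding suffix_avg_def
  by (simp add: sum_subtractf sum_divide_distrib[symmetric] diff_divide_distrib mult.commute)

lemma suffix_avg_sum:
  "suffix_avg k (\<lambda>z. \<Sum>i\<in>I. c i * h i z) x = (\<Sum>i\<in>I. c i * suffix_avg k (h i) x)"
  unfolding suffix_avg_def
  by (subst sum.swap) (simp add: sum_distrib_left sum_divide_distrib mult.assoc)

lemma suffix_avg_suffix_avg:
  assumes x: "x \<in> states" and "j \<le> n" and "k \<le> n"
  shows "suffix_avg j (suffix_avg k g) x = suffix_avg (max j k) g x"
proof (cases "j \<le> k")
  case True
  have "suffix_avg k g z = suffix_avg k g x" if "z \<in> cylinder (n - j) x" for z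
    using cylinder_eq[of "n - k" "n - j", OF _ that] True unfolding suffix_avg_def by simp
  then have "(\<Sum>z\<in>cylinder (n - j) x. suffix_avg k g z) = real q ^ j * suffix_avg k g x"
    using card_cylinder[OF x, of "n - j"] \<open>j \<le> n\<close> by simp
  then show ?thesis using True q_pos by (simp add: suffix_avg_def[of j])
next
  case False
  let ?C = "cylinder (n - j) x" and ?agree = "\<lambda>y z. take (n - k) y = take (n - k) z"
  have "(\<Sum>z\<in>?C. \<Sum>y\<in>cylinder (n - k) z. g y) = (\<Sum>z\<in>?C. \<Sum>y\<in>{y \<in> ?C. ?agree y z}. g y)"
    using False cylinder_restrict[of "n - j" "n - k"] by (intro sum.cong refl) simp
  also have "\<dots> = (\<Sum>y\<in>?C. \<Sum>z\<in>{z \<in> ?C. ?agree y z}. g y)"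
    by (rule sum.swap_restrict[OF finite_cylinder finite_cylinder])
  also have "\<dots> = (\<Sum>y\<in>?C. real q ^ k * g y)"
  proof (intro sum.cong refl)
    fix y assume y: "y \<in> ?C"
    have "{z \<in> ?C. ?agree y z} = cylinder (n - k) y"
      using cylinder_restrict[of "n - j" "n - k", OF _ y] False by (auto simp: eq_commute)
    moreover have "y \<in> states" using y cylinder_subset by blast
    ultimately show "(\<Sum>z\<in>{z \<in> ?C. ?agree y z}. g y) = real q ^ k * g y"
      using card_cylinder[of y "n - k"] \<open>k \<le> n\<close> by simp
  qed
  finally have "(\<Sum>z\<in>?C. suffix_avg k g z) = (\<Sum>y\<in>?C. g y)"
    using q_pos by (simp add: suffix_avg_def sum_divide_distrib[symmetric] sum_distrib_left[symmetric])
  then show ?thesis using False by (simp add: suffix_avg_def)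
qed

lemma trans_op_eq_sum_suffix_avg:
  assumes x: "x \<in> states"
  shows "trans_op g x = (\<Sum>i = 1..n. insect_weight q n i * suffix_avg i g x)"
proof -
  let ?c = "\<lambda>i. insect_weight q n i / real q ^ i"
  have "insect_p q n x z * g z =
      (\<Sum>i = 1..n. if take (n - i) z = take (n - i) x then ?c i * g z else 0)" if "z \<in> states" for z
  proof -
    have "length x = n" and "length z = n" using x that by (simp_all add: words_def)
    then show ?thesis
      unfolding insect_p_eq_sum[OF \<open>length x = n\<close> \<open>length z = n\<close> n_ge_1] sum_distrib_right
      by (intro sum.cong) auto
  qed
  then have "trans_op g x =
      (\<Sum>i = 1..n. \<Sum>z\<in>states. if take (n - i) z = take (n - i) x then ?c i * g z else 0)"
    unfolding trans_op_def by (subst sum.swap) simp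
  also have "\<dots> = (\<Sum>i = 1..n. ?c i * (\<Sum>z\<in>cylinder (n - i) x. g z))"
    unfolding cylinder_def sum_distrib_left
    by (simp add: sum.inter_filter[OF finite_words, symmetric])
  finally show ?thesis by (simp add: suffix_avg_def)
qed

lemma suffix_avg_trans_op:
  assumes x: "x \<in> states" and "j \<le> n"
  shows "suffix_avg j (trans_op g) x = (\<Sum>i = 1..n. insect_weight q n i * suffix_avg (max i j) g x)"
proof -
  have "suffix_avg j (trans_op g) x =
      suffix_avg j (\<lambda>z. \<Sum>i = 1..n. insect_weight q n i * suffix_avg i g z) x"
    by (rule suffix_avg_cong) (rule trans_op_eq_sum_suffix_avg)
  also have "\<dots> = (\<Sum>i = 1..n. insect_weight q n i * suffix_avg j (suffix_avg i g) x)"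
    by (rule suffix_avg_sum)
  also have "\<dots> = (\<Sum>i = 1..n. insect_weight q n i * suffix_avg (max i j) g x)"
    using suffix_avg_suffix_avg[OF x \<open>j \<le> n\<close>] by (intro sum.cong refl) (simp add: max.commute)
  finally show ?thesis .
qed

lemma suffix_avg_1_trans_op: "x \<in> states \<Longrightarrow> suffix_avg 1 (trans_op g) x = trans_op g x"
  using n_ge_1 by (auto simp: suffix_avg_trans_op trans_op_eq_sum_suffix_avg max_def intro!: sum.cong)

lemma weight_sum_pos: "1 \<le> k \<Longrightarrow> k \<le> n \<Longrightarrow> weight_sum k > 0"
  unfolding weight_sum_def using insect_weight_pos[OF q_ge_2] by (intro sum_pos) auto

text \<open>For \<open>k = n\<close> the right-hand side is \<open>0\<close>.\<close>
lemma suffix_avg_eigen_step: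
  assumes x: "x \<in> states" and k: "1 \<le> k" "k \<le> n" and j: "1 \<le> j" "j \<le> Suc k" "j \<le> n"
    and flat: "\<And>i. 1 \<le> i \<Longrightarrow> i \<le> k \<Longrightarrow> suffix_avg i h x = suffix_avg 1 h x"
  shows "suffix_avg j (\<lambda>z. h z - trans_op h z / weight_sum k) x =
    - (\<Sum>i\<in>{k<..n}. insect_weight q n i * suffix_avg i h x) / weight_sum k"
proof -
  let ?w = "insect_weight q n"
  have low: "suffix_avg (max i j) h x = suffix_avg j h x" if "1 \<le> i" "i \<le> k" for i
  proof (cases "j \<le> k")
    case True
    then show ?thesis using flat[of j] flat[of "max i j"] that j by simp
  qed (use that j in \<open>simp add: max_def\<close>)
  have high: "suffix_avg (max i j) h x = suffix_avg i h x" if "i \<in> {k<..n}" for i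
    using that j by (subst max_absorb1) auto
  have "{1..n} = {1..k} \<union> {k<..n}" and "{1..k} \<inter> {k<..n} = {}" using k by auto
  then have "suffix_avg j (trans_op h) x =
      (\<Sum>i = 1..k. ?w i * suffix_avg (max i j) h x) + (\<Sum>i\<in>{k<..n}. ?w i * suffix_avg (max i j) h x)"
    unfolding suffix_avg_trans_op[OF x j(3)] by (simp add: sum.union_disjoint)
  also have "\<dots> = weight_sum k * suffix_avg j h x + (\<Sum>i\<in>{k<..n}. ?w i * suffix_avg i h x)"
    using low high by (simp add: weight_sum_def sum_distrib_right)
  finally show ?thesis
    unfolding suffix_avg_diff_divide using weight_sum_pos[OF k] by (simp add: field_simps)
qed

primrec eigen_filter :: "nat \<Rightarrow> (nat list \<Rightarrow> real) \<Rightarrow> nat list \<Rightarrow> real" where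
  "eigen_filter 0 g = g"
| "eigen_filter (Suc k) g =
    (\<lambda>x. eigen_filter k g x - trans_op (eigen_filter k g) x / weight_sum (Suc k))"

lemma eigen_filter_sub_suffix_avg_1:
  assumes x: "x \<in> states"
  shows "eigen_filter k g x - suffix_avg 1 (eigen_filter k g) x = g x - suffix_avg 1 g x"
proof (induction k)
  case (Suc k)
  then show ?case
    using suffix_avg_1_trans_op[OF x, of "eigen_filter k g"] by (simp add: suffix_avg_diff_divide)
qed simp

lemma suffix_avg_eigen_filter:
  assumes x: "x \<in> states" and "k \<le> n" and "1 \<le> j" "j \<le> Suc k" "j \<le> n"
  shows "suffix_avg j (eigen_filter k g) x = suffix_avg 1 (eigen_filter k g) x"
  using assms(2-)
proof (induction k arbitrary: j)
  case (Suc k)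
  have flat: "suffix_avg i (eigen_filter k g) x = suffix_avg 1 (eigen_filter k g) x"
    if "1 \<le> i" "i \<le> Suc k" for i
    by (rule Suc.IH) (use that Suc.prems(1) in auto)
  have "1 \<le> Suc k" by simp
  note step = suffix_avg_eigen_step[OF x this Suc.prems(1) _ _ _ flat]
  show ?case using step[of j] step[of 1] Suc.prems by simp
qed simp

lemma eigen_filter_eq_sub_suffix_avg_1:
  assumes x: "x \<in> states"
  shows "eigen_filter n g x = g x - suffix_avg 1 g x"
proof -
  obtain m where n: "n = Suc m" using n_ge_1 by (cases n) auto
  have flat: "suffix_avg i (eigen_filter m g) x = suffix_avg 1 (eigen_filter m g) x"
    if "1 \<le> i" "i \<le> n" for i
    by (rule suffix_avg_eigen_filter[OF x]) (use that n in auto)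
  have "eigen_filter n g =
      (\<lambda>z. eigen_filter m g z - trans_op (eigen_filter m g) z / weight_sum n)"
    using eigen_filter.simps(2)[of m g] unfolding n[symmetric] .
  then have "suffix_avg 1 (eigen_filter n g) x = 0"
    using suffix_avg_eigen_step[OF x n_ge_1 order.refl _ _ _ flat, of 1] n_ge_1 by simp
  then show ?thesis using eigen_filter_sub_suffix_avg_1[OF x, of n g] by simp
qed

lemma suffix_avg_pos_iff:
  assumes "\<And>z. z \<in> states \<Longrightarrow> f z \<ge> 0"
  shows "suffix_avg k f x > 0 \<longleftrightarrow> (\<exists>z\<in>cylinder (n - k) x. f z > 0)"
proof -
  have nonneg: "f z \<ge> 0" if "z \<in> cylinder (n - k) x" for z
    using assms cylinder_subset that by blast
  have "(\<Sum>z\<in>cylinder (n - k) x. f z) > 0 \<longleftrightarrow> (\<exists>z\<in>cylinder (n - k) x. f z > 0)"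
    using sum_nonneg_eq_0_iff[OF finite_cylinder nonneg] sum_nonneg[OF nonneg] nonneg
    by (auto simp: order.strict_iff_order)
  then show ?thesis using q_pos by (simp add: suffix_avg_def zero_less_divide_iff)
qed

lemma cylinder_butlast: "u \<in> states \<Longrightarrow> cylinder (n - 1) u = {z \<in> states. butlast z = butlast u}"
  unfolding cylinder_def by (auto simp: words_def butlast_conv_take)

end

locale insect_lumping = insect_chain +
  fixes P :: "nat list set set"
  assumes partition: "partition_on states P" and lumpable: "insect_lumpable q n P"
begin

definition block_const :: "(nat list \<Rightarrow> real) set" where
  "block_const = {g. \<forall>L\<in>P. \<forall>x\<in>L. \<forall>y\<in>L. g x = g y}"

lemma block_subset: "L \<in> P \<Longrightarrow> L \<subseteq> states"
  unfolding partition_onD1[OF partition] by (rule Union_upper)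

lemma blocks_disjoint: "L \<in> P \<Longrightarrow> L' \<in> P \<Longrightarrow> L \<noteq> L' \<Longrightarrow> L \<inter> L' = {}"
  by (rule disjointD[OF partition_onD2[OF partition]])

lemma block_constD: "g \<in> block_const \<Longrightarrow> L \<in> P \<Longrightarrow> x \<in> L \<Longrightarrow> y \<in> L \<Longrightarrow> g x = g y"
  unfolding block_const_def by blast

lemma block_const_comp2:
  assumes "g \<in> block_const" and "h \<in> block_const"
  shows "(\<lambda>x. F (g x) (h x)) \<in> block_const"
  unfolding block_const_def
proof (intro CollectI ballI)
  fix L x y assume "L \<in> P" "x \<in> L" "y \<in> L"
  then show "F (g x) (h x) = F (g y) (h y)"
    using block_constD[OF assms(1)] block_constD[OF assms(2)] by metis
qed

lemma block_const_cong:
  assumes "g \<in> block_const" and "\<And>x. x \<in> states \<Longrightarrow> h x = g x"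
  shows "h \<in> block_const"
  unfolding block_const_def
proof (intro CollectI ballI)
  fix L x y assume "L \<in> P" "x \<in> L" "y \<in> L"
  moreover from this have "x \<in> states" "y \<in> states" using block_subset by auto
  ultimately show "h x = h y" using assms(2) block_constD[OF assms(1)] by metis
qed

lemma indicator_block_const:
  assumes "L \<in> P"
  shows "(\<lambda>z. of_bool (z \<in> L)) \<in> block_const"
  unfolding block_const_def
proof (intro CollectI ballI)
  fix L' x y assume "L' \<in> P" "x \<in> L'" "y \<in> L'"
  then show "of_bool (x \<in> L) = of_bool (y \<in> L)"
    using blocks_disjoint[OF assms \<open>L' \<in> P\<close>] by (cases "L = L'") auto
qed

lemma trans_op_block_const:
  assumes g: "g \<in> block_const"
  shows "trans_op g \<in> block_const"
proof -
  have block_sum: "(\<Sum>z\<in>L'. insect_p q n u z * g z) = (\<Sum>z\<in>L'. insect_p q n v z * g z)"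
    if "L \<in> P" "L' \<in> P" "u \<in> L" "v \<in> L" for L L' u v
  proof (cases "L' = {}")
    case False
    then obtain z0 where "z0 \<in> L'" by blast
    then have "g z = g z0" if "z \<in> L'" for z
      using block_constD[OF g \<open>L' \<in> P\<close> that] by blast
    then have "(\<Sum>z\<in>L'. insect_p q n w z * g z) = (\<Sum>z\<in>L'. insect_p q n w z) * g z0" for w
      by (simp add: sum_distrib_right)
    moreover have "(\<Sum>z\<in>L'. insect_p q n u z) = (\<Sum>z\<in>L'. insect_p q n v z)"
      using lumpable that unfolding insect_lumpable_def by blast
    ultimately show ?thesis by simp
  qed simp
  have by_blocks: "trans_op g u = (\<Sum>L'\<in>P. \<Sum>z\<in>L'. insect_p q n u z * g z)" for u
  proof -
    have "\<forall>L\<in>P. finite L" using block_subset finite_words finite_subset by blast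
    moreover have "\<forall>L\<in>P. \<forall>L'\<in>P. L \<noteq> L' \<longrightarrow> L \<inter> L' = {}"
      using blocks_disjoint by blast
    ultimately show ?thesis
      unfolding trans_op_def partition_onD1[OF partition] by (simp add: sum.Union_disjoint)
  qed
  show ?thesis
    unfolding block_const_def
  proof (intro CollectI ballI)
    fix L u v assume "L \<in> P" "u \<in> L" "v \<in> L"
    show "trans_op g u = trans_op g v"
      unfolding by_blocks
    proof (rule sum.cong[OF refl])
      fix L' assume "L' \<in> P"
      from \<open>L \<in> P\<close> this \<open>u \<in> L\<close> \<open>v \<in> L\<close>
      show "(\<Sum>z\<in>L'. insect_p q n u z * g z) = (\<Sum>z\<in>L'. insect_p q n v z * g z)"
        by (rule block_sum)
    qed
  qed
qed

lemma eigen_filter_block_const: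
  assumes "g \<in> block_const"
  shows "eigen_filter k g \<in> block_const"
proof (induction k)
  case (Suc k)
  then show ?case
    unfolding eigen_filter.simps by (rule block_const_comp2[OF _ trans_op_block_const[OF Suc]])
qed (simp add: assms)

lemma suffix_avg_1_block_const:
  assumes "g \<in> block_const"
  shows "suffix_avg 1 g \<in> block_const"
proof (rule block_const_cong)
  show "(\<lambda>x. g x - eigen_filter n g x) \<in> block_const"
    by (rule block_const_comp2[OF assms eigen_filter_block_const[OF assms]])
qed (simp add: eigen_filter_eq_sub_suffix_avg_1)

lemma butlast_image_subset:
  assumes Li: "Li \<in> P" and Lj: "Lj \<in> P" and "x \<in> Li" and "y \<in> Lj" and "butlast x = butlast y"
  shows "butlast ` Li \<subseteq> butlast ` Lj"
proof
  fix v assume "v \<in> butlast ` Li"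
  then obtain x' where "x' \<in> Li" and v: "v = butlast x'" by blast
  let ?f = "\<lambda>z. of_bool (z \<in> Lj) :: real"
  have meets_Lj: "suffix_avg 1 ?f u > 0 \<longleftrightarrow> (\<exists>z\<in>Lj. butlast z = butlast u)" if "u \<in> states" for u
    using suffix_avg_pos_iff[of ?f 1 u] block_subset[OF Lj] cylinder_butlast[OF that] by auto
  have "suffix_avg 1 ?f x' = suffix_avg 1 ?f x"
    by (rule block_constD[OF suffix_avg_1_block_const[OF indicator_block_const[OF Lj]] Li])
      (use \<open>x \<in> Li\<close> \<open>x' \<in> Li\<close> in auto)
  moreover have "x \<in> states" "x' \<in> states" using block_subset Li \<open>x \<in> Li\<close> \<open>x' \<in> Li\<close> by auto
  ultimately obtain z where "z \<in> Lj" and "butlast z = butlast x'"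
    using meets_Lj assms(4,5) by metis
  then show "v \<in> butlast ` Lj" using v by (auto intro: rev_image_eqI)
qed

end

theorem lemma13:
  fixes q n :: nat and P :: "nat list set set"
  assumes "q \<ge> 2" and "n \<ge> 2"
    and "partition_on (words q n) P"
    and "insect_lumpable q n P"
    and "Li \<in> P" and "Lj \<in> P"
    and "butlast ` Li \<inter> butlast ` Lj \<noteq> {}"
  shows "butlast ` Li = butlast ` Lj"
proof -
  interpret insect_lumping q n P
    using assms(1-4) by unfold_locales simp_all
  obtain x y where "x \<in> Li" and "y \<in> Lj" and "butlast x = butlast y"
    using assms(7) by auto
  then show ?thesis
    using butlast_image_subset[OF assms(5,6)] butlast_image_subset[OF assms(6,5)] by (metis subset_antisym)
qed

end
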